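(* For all $n\ge0$, $0\le k\le n$ and complex $a,b,c_0,c_\infty$, $$b^kk!\,E_{n,k}(a,b;c_0,c_\infty)=\sum_{j=0}^k(-1)^{k-j}\binom kj(bn+c_0+c_\infty)^{\underline{k-j},b}(c_0+c_\infty)^{\overline j,b}(bj+c_0)^{\underline n,a},$$ $$(c_0+c_\infty)^{\overline k,b}\,(bk+c_0)^{\underline n,a}=\sum_{j=0}^k\binom kj(bn+c_0+c_\infty)^{\overline{k-j},b}\,b^jj!\,E_{n,j}(a,b;c_0,c_\infty).$$
   Context: GKP triangle $\left[\begin{array}{cc|c}\alpha,&\beta&\gamma\\ \alpha',&\beta'&\gamma'\end{array}\right]_{n,k}$: defined by $T_{0,0}=1$, $T_{n,k}=0$ if $n<0$, $k<0$ or $k>n$, and $T_{n+1,k+1}=[\alpha n+\beta(k+1)+\gamma]T_{n,k+1}+[\alpha' n+\beta' k+\gamma']T_{n,k}$ for $n\ge0$, $k\in\mathbb Z$. Generalized Eulerian numbers: $E_{n,k}(a,b;c_0,c_\infty):=\left[\begin{array}{cc|c}-a,&b&c_0\\ a+b,&-b&c_\infty\end{array}\right]_{n,k}$. $(x)^{\overline n,b}=\prod_{i=0}^{n-1}(x+ib)$, $(x)^{\underline n,b}=\prod_{i=0}^{n-1}(x-ib)$. *)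

theory Defs
  imports Complex_Main
begin

text \<open>GKP triangle T(n,k) with parameters alpha, beta, gamma, alpha', beta', gamma'.
  T(0,0)=1, T(n,k)=0 if k<0 or k>n, and
  T(n+1,k+1) = (alpha n + beta (k+1) + gamma) T(n,k+1) + (alpha' n + beta' k + gamma') T(n,k)
  for all integers k. Equivalently T(n+1,k) uses the recurrence with k-1 in place of k.\<close>

fun gkp :: "complex \<Rightarrow> complex \<Rightarrow> complex \<Rightarrow> complex \<Rightarrow> complex \<Rightarrow> complex \<Rightarrow> nat \<Rightarrow> int \<Rightarrow> complex" where
  "gkp al be ga al' be' ga' 0 k = (if k = 0 then 1 else 0)"
| "gkp al be ga al' be' ga' (Suc n) k =
     (if k < 0 \<or> k > int (Suc n) then 0 else
        (al * of_nat n + be * of_int k + ga) * gkp al be ga al' be' ga' n k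
      + (al' * of_nat n + be' * of_int (k - 1) + ga') * gkp al be ga al' be' ga' n (k - 1))"

definition genEuler :: "complex \<Rightarrow> complex \<Rightarrow> complex \<Rightarrow> complex \<Rightarrow> nat \<Rightarrow> nat \<Rightarrow> complex" where
  "genEuler a b c0 cinf n k = gkp (-a) b c0 (a + b) (-b) cinf n (int k)"

definition rising_b :: "complex \<Rightarrow> nat \<Rightarrow> complex \<Rightarrow> complex" where
  "rising_b x n b = (\<Prod>i<n. x + of_nat i * b)"

definition falling_b :: "complex \<Rightarrow> nat \<Rightarrow> complex \<Rightarrow> complex" where
  "falling_b x n b = (\<Prod>i<n. x - of_nat i * b)"

end

theory Submission
  imports Defs
begin

text \<open>Write \<open>U(j) = b^j j! E(n,j)\<close>, \<open>x = bn + c0 + cinf\<close> and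
  \<open>F(k) = (c0 + cinf)^(k rising, step b) * (bk + c0)^(n falling, step a)\<close>. The second identity
  says that \<open>F\<close> is the binomial convolution of \<open>U\<close> with the \<open>b\<close>-rising factorials of \<open>x\<close>; it
  follows by induction on \<open>n\<close>, where passing to \<open>n + 1\<close> multiplies \<open>F(k)\<close> by \<open>bk + c0 - an\<close> and
  the triangle recurrence splits this factor between the two neighbouring terms. By Vandermonde's
  convolution for \<open>b\<close>-rising factorials, convolution with the rising factorials of \<open>x\<close> is
  inverted by convolution with those of \<open>-x\<close>, i.e. with the signed falling factorials of \<open>x\<close>;
  this gives the first identity.\<close>

lemma rising_b_0 [simp]: "rising_b x 0 b = 1"
  by (simp add: rising_b_def)

lemma falling_b_0 [simp]: "falling_b x 0 b = 1"
  by (simp add: falling_b_def)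

lemma rising_b_Suc: "rising_b x (Suc m) b = x * rising_b (x + b) m b"
  unfolding rising_b_def prod.lessThan_Suc_shift by (simp add: algebra_simps)

lemma rising_b_Suc': "rising_b x (Suc m) b = rising_b x m b * (x + of_nat m * b)"
  unfolding rising_b_def by simp

lemma falling_b_Suc': "falling_b x (Suc m) b = falling_b x m b * (x - of_nat m * b)"
  unfolding falling_b_def by simp

lemma rising_b_uminus: "rising_b (- x) m b = (-1) ^ m * falling_b x m b"
  by (induction m) (simp_all add: falling_b_Suc' rising_b_Suc' algebra_simps)

lemma rising_b_zero_left: "rising_b 0 m b = (if m = 0 then 1 else 0)"
  by (cases m) (simp_all add: rising_b_Suc)

lemma sum_atMost_Suc_choose:
  fixes f :: "nat \<Rightarrow> 'a::comm_semiring_1"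
  shows "(\<Sum>i\<le>Suc k. of_nat (Suc k choose i) * f i)
       = (\<Sum>i\<le>k. of_nat (k choose i) * f i) + (\<Sum>i\<le>k. of_nat (k choose i) * f (Suc i))"
proof -
  have "(\<Sum>i\<le>Suc k. of_nat (Suc k choose i) * f i)
      = (f 0 + (\<Sum>i\<le>k. of_nat (k choose Suc i) * f (Suc i))) + (\<Sum>i\<le>k. of_nat (k choose i) * f (Suc i))"
    unfolding sum.atMost_Suc_shift by (simp add: ring_distribs sum.distrib add_ac)
  also have "f 0 + (\<Sum>i\<le>k. of_nat (k choose Suc i) * f (Suc i)) = (\<Sum>i\<le>Suc k. of_nat (k choose i) * f i)"
    unfolding sum.atMost_Suc_shift by simp
  also have "\<dots> = (\<Sum>i\<le>k. of_nat (k choose i) * f i)"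
    by (simp add: binomial_eq_0)
  finally show ?thesis .
qed

lemma rising_b_add:
  "rising_b (y + z) k b = (\<Sum>j\<le>k. of_nat (k choose j) * rising_b y j b * rising_b z (k - j) b)"
proof (induction k arbitrary: y z)
  case 0
  then show ?case by simp
next
  case (Suc k y z)
  have "(\<Sum>j\<le>Suc k. of_nat (Suc k choose j) * (rising_b y j b * rising_b z (Suc k - j) b))
      = (\<Sum>j\<le>k. of_nat (k choose j) * (rising_b y j b * rising_b z (Suc k - j) b))
      + (\<Sum>j\<le>k. of_nat (k choose j) * (rising_b y (Suc j) b * rising_b z (k - j) b))"
    using sum_atMost_Suc_choose[where f = "\<lambda>j. rising_b y j b * rising_b z (Suc k - j) b" and k = k] by simp
  also have "(\<Sum>j\<le>k. of_nat (k choose j) * (rising_b y j b * rising_b z (Suc k - j) b))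
      = z * rising_b (y + (z + b)) k b"
    by (simp add: Suc sum_distrib_left rising_b_Suc Suc_diff_le mult_ac)
  also have "(\<Sum>j\<le>k. of_nat (k choose j) * (rising_b y (Suc j) b * rising_b z (k - j) b))
      = y * rising_b (y + b + z) k b"
    by (simp add: Suc sum_distrib_left rising_b_Suc mult_ac)
  finally show ?case
    by (simp add: rising_b_Suc algebra_simps)
qed

lemma sum_choose_mult_rising_b:
  assumes "i \<le> k"
  shows "(\<Sum>j\<le>k. of_nat (k choose j) * of_nat (j choose i) * rising_b z (k - j) b * rising_b y (j - i) b)
       = of_nat (k choose i) * rising_b (y + z) (k - i) b"
proof -
  let ?t = "\<lambda>j. of_nat (k choose j) * of_nat (j choose i) * rising_b z (k - j) b * rising_b y (j - i) b"
  have "(\<Sum>j\<le>k. ?t j) = (\<Sum>j=i..k. ?t j)"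
    by (rule sum.mono_neutral_right) (auto simp: binomial_eq_0)
  also have "\<dots> = (\<Sum>m\<le>k - i. ?t (m + i))"
    using sum.shift_bounds_cl_nat_ivl[of ?t 0 i "k - i"] assms by (simp add: atLeast0AtMost)
  also have "\<dots> = of_nat (k choose i)
      * (\<Sum>m\<le>k - i. of_nat ((k - i) choose m) * rising_b y m b * rising_b z (k - i - m) b)"
    unfolding sum_distrib_left
  proof (intro sum.cong refl)
    fix m assume "m \<in> {..k - i}"
    then have "(k choose (m + i)) * ((m + i) choose i) = (k choose i) * ((k - i) choose m)"
      using choose_mult[of i "m + i" k] assms by simp
    then have "of_nat (k choose (m + i)) * of_nat ((m + i) choose i)
        = (of_nat (k choose i) * of_nat ((k - i) choose m) :: complex)"
      by (metis of_nat_mult)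
    then show "?t (m + i) = of_nat (k choose i)
        * (of_nat ((k - i) choose m) * rising_b y m b * rising_b z (k - i - m) b)"
      by (simp add: algebra_simps)
  qed
  also have "\<dots> = of_nat (k choose i) * rising_b (y + z) (k - i) b"
    by (simp add: rising_b_add)
  finally show ?thesis .
qed

lemma rising_b_binomial_inversion:
  fixes F U :: "nat \<Rightarrow> complex"
  assumes F: "\<And>m. F m = (\<Sum>j\<le>m. of_nat (m choose j) * rising_b y (m - j) b * U j)"
  shows "U k = (\<Sum>j\<le>k. of_nat (k choose j) * rising_b (- y) (k - j) b * F j)"
proof -
  have "(\<Sum>j\<le>k. of_nat (k choose j) * rising_b (- y) (k - j) b * F j)
      = (\<Sum>j\<le>k. \<Sum>i\<le>k. of_nat (k choose j) * of_nat (j choose i)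
           * rising_b (- y) (k - j) b * rising_b y (j - i) b * U i)"
  proof (intro sum.cong refl)
    fix j assume "j \<in> {..k}"
    have "F j = (\<Sum>i\<le>k. of_nat (j choose i) * rising_b y (j - i) b * U i)"
      unfolding F using \<open>j \<in> {..k}\<close> by (intro sum.mono_neutral_left) (auto simp: binomial_eq_0)
    then show "of_nat (k choose j) * rising_b (- y) (k - j) b * F j
        = (\<Sum>i\<le>k. of_nat (k choose j) * of_nat (j choose i)
             * rising_b (- y) (k - j) b * rising_b y (j - i) b * U i)"
      by (simp add: sum_distrib_left mult_ac)
  qed
  also have "\<dots> = (\<Sum>i\<le>k. (\<Sum>j\<le>k. of_nat (k choose j) * of_nat (j choose i)
      * rising_b (- y) (k - j) b * rising_b y (j - i) b) * U i)"
    by (subst sum.swap) (simp add: sum_distrib_right)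
  also have "\<dots> = (\<Sum>i\<le>k. of_nat (k choose i) * rising_b (y + - y) (k - i) b * U i)"
    by (intro sum.cong refl) (simp add: sum_choose_mult_rising_b)
  also have "\<dots> = (\<Sum>i\<le>k. if i = k then U i else 0)"
    by (intro sum.cong refl) (auto simp: rising_b_zero_left)
  also have "\<dots> = U k"
    by simp
  finally show ?thesis ..
qed

lemma gkp_eq_0: "k < 0 \<or> int n < k \<Longrightarrow> gkp al be ga al' be' ga' n k = 0"
  by (cases n) auto

lemma gkp_Suc:
  "gkp al be ga al' be' ga' (Suc n) k =
     (al * of_nat n + be * of_int k + ga) * gkp al be ga al' be' ga' n k
   + (al' * of_nat n + be' * of_int (k - 1) + ga') * gkp al be ga al' be' ga' n (k - 1)"
proof (cases "k < 0 \<or> int (Suc n) < k")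
  case True
  then show ?thesis by (auto simp: gkp_eq_0 simp del: gkp.simps)
qed simp

definition scaled_genEuler ::
    "complex \<Rightarrow> complex \<Rightarrow> complex \<Rightarrow> complex \<Rightarrow> nat \<Rightarrow> nat \<Rightarrow> complex" where
  "scaled_genEuler a b c0 cinf n k = b ^ k * of_nat (fact k) * genEuler a b c0 cinf n k"

lemma scaled_genEuler_0: "scaled_genEuler a b c0 cinf 0 k = (if k = 0 then 1 else 0)"
  by (simp add: scaled_genEuler_def genEuler_def)

lemma scaled_genEuler_Suc:
  "scaled_genEuler a b c0 cinf (Suc n) k =
     (b * of_nat k + c0 - a * of_nat n) * scaled_genEuler a b c0 cinf n k
   + of_nat k * b * ((a + b) * of_nat n - b * of_nat (k - 1) + cinf)
       * scaled_genEuler a b c0 cinf n (k - 1)"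
  \<comment> \<open>at \<open>k = 0\<close> the factor \<open>k\<close> kills the second summand, so the truncated
    \<open>k - 1\<close> is harmless\<close>
proof (cases k)
  case 0
  then show ?thesis
    by (simp add: scaled_genEuler_def genEuler_def gkp_Suc gkp_eq_0 del: gkp.simps(2))
next
  case (Suc i)
  then show ?thesis
    by (simp add: scaled_genEuler_def genEuler_def gkp_Suc del: gkp.simps(2) of_nat_Suc)
       (simp add: algebra_simps)
qed

lemma Suc_times_choose_Suc: "Suc j * (k choose Suc j) = (k - j) * (k choose j)"
  by (metis binomial_absorption binomial_absorb_comp)

lemma sum_choose_times_shift:
  fixes g :: "nat \<Rightarrow> nat \<Rightarrow> 'a::comm_semiring_1"
  shows "(\<Sum>j\<le>k. of_nat (k choose j) * of_nat j * g (k - j) (j - 1))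
       = (\<Sum>i\<le>k. of_nat (k choose i) * of_nat (k - i) * g (k - i - 1) i)"
proof -
  have "(\<Sum>j\<le>k. of_nat (k choose j) * of_nat j * g (k - j) (j - 1))
      = (\<Sum>i<k. of_nat (k choose Suc i) * of_nat (Suc i) * g (k - Suc i) i)"
    unfolding sum.atMost_shift by simp
  also have "\<dots> = (\<Sum>i<k. of_nat (k choose i) * of_nat (k - i) * g (k - i - 1) i)"
  proof (intro sum.cong refl)
    fix i
    have "of_nat (k choose Suc i) * of_nat (Suc i) = (of_nat (k choose i) * of_nat (k - i) :: 'a)"
      by (metis Suc_times_choose_Suc mult.commute of_nat_mult)
    then show "of_nat (k choose Suc i) * of_nat (Suc i) * g (k - Suc i) i
        = of_nat (k choose i) * of_nat (k - i) * g (k - i - 1) i"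
      by simp
  qed
  also have "\<dots> = (\<Sum>i\<le>k. of_nat (k choose i) * of_nat (k - i) * g (k - i - 1) i)"
    by (rule sum.mono_neutral_left) auto
  finally show ?thesis .
qed

lemma rising_b_step_combination:
  "(d + of_nat m * b) * rising_b x m b
     = d * rising_b (x + b) m b + of_nat m * b * (x - d) * rising_b (x + b) (m - 1) b"
proof (cases m)
  case (Suc p)
  have "rising_b x (Suc p) b = x * rising_b (x + b) p b"
    by (rule rising_b_Suc)
  moreover have "rising_b (x + b) (Suc p) b = rising_b (x + b) p b * (x + of_nat (Suc p) * b)"
    by (simp add: rising_b_Suc' algebra_simps)
  ultimately show ?thesis
    using Suc by (simp add: algebra_simps)
qed simp

lemma rising_b_falling_b_expansion:
  "rising_b (c0 + cinf) k b * falling_b (b * of_nat k + c0) n a =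
     (\<Sum>j\<le>k. of_nat (k choose j) * rising_b (b * of_nat n + c0 + cinf) (k - j) b
        * scaled_genEuler a b c0 cinf n j)"
proof (induction n arbitrary: k)
  case 0
  have "(\<Sum>j\<le>k. of_nat (k choose j) * rising_b (c0 + cinf) (k - j) b * scaled_genEuler a b c0 cinf 0 j)
      = (\<Sum>j\<le>k. if j = 0 then rising_b (c0 + cinf) k b else 0)"
    by (intro sum.cong refl) (simp add: scaled_genEuler_0)
  then show ?case
    by simp
next
  case (Suc n k)
  let ?U = "scaled_genEuler a b c0 cinf n"
  define x where "x = b * of_nat n + c0 + cinf"
  define d where "d j = b * of_nat j + c0 - a * of_nat n" for j :: nat
  define e where "e j = (a + b) * of_nat n - b * of_nat j + cinf" for j :: nat
  have "rising_b (c0 + cinf) k b * falling_b (b * of_nat k + c0) (Suc n) a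
      = d k * (\<Sum>j\<le>k. of_nat (k choose j) * rising_b x (k - j) b * ?U j)"
    unfolding falling_b_Suc' mult.assoc[symmetric] Suc.IH by (simp add: x_def d_def algebra_simps)
  also have "\<dots> = (\<Sum>j\<le>k. of_nat (k choose j) * rising_b (x + b) (k - j) b * (d j * ?U j))
      + (\<Sum>j\<le>k. of_nat (k choose j) * of_nat (k - j) * (rising_b (x + b) (k - j - 1) b * b * e j * ?U j))"
    unfolding sum_distrib_left sum.distrib[symmetric]
  proof (intro sum.cong refl)
    fix j assume "j \<in> {..k}"
    then have dk: "d k = d j + of_nat (k - j) * b"
      by (simp add: d_def of_nat_diff algebra_simps)
    have ej: "e j = x - d j"
      by (simp add: d_def e_def x_def algebra_simps)
    have "d k * rising_b x (k - j) b
        = d j * rising_b (x + b) (k - j) b + of_nat (k - j) * b * e j * rising_b (x + b) (k - j - 1) b"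
      unfolding dk ej by (rule rising_b_step_combination)
    from arg_cong[OF this, of "\<lambda>t. of_nat (k choose j) * ?U j * t"]
    show "d k * (of_nat (k choose j) * rising_b x (k - j) b * ?U j)
        = of_nat (k choose j) * rising_b (x + b) (k - j) b * (d j * ?U j)
          + of_nat (k choose j) * of_nat (k - j) * (rising_b (x + b) (k - j - 1) b * b * e j * ?U j)"
      by (simp add: algebra_simps)
  qed
  also have "(\<Sum>j\<le>k. of_nat (k choose j) * of_nat (k - j)
        * (rising_b (x + b) (k - j - 1) b * b * e j * ?U j))
      = (\<Sum>j\<le>k. of_nat (k choose j) * of_nat j
        * (rising_b (x + b) (k - j) b * b * e (j - 1) * ?U (j - 1)))"
    by (rule sum_choose_times_shift [symmetric])
  also have "(\<Sum>j\<le>k. of_nat (k choose j) * rising_b (x + b) (k - j) b * (d j * ?U j))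
      + (\<Sum>j\<le>k. of_nat (k choose j) * of_nat j
          * (rising_b (x + b) (k - j) b * b * e (j - 1) * ?U (j - 1)))
      = (\<Sum>j\<le>k. of_nat (k choose j) * rising_b (b * of_nat (Suc n) + c0 + cinf) (k - j) b
          * scaled_genEuler a b c0 cinf (Suc n) j)"
    unfolding sum.distrib[symmetric] scaled_genEuler_Suc
    by (intro sum.cong refl) (simp add: x_def d_def e_def algebra_simps)
  finally show ?case .
qed

theorem mainTheorem11:
  fixes a b c0 cinf :: complex and n k :: nat
  assumes "k \<le> n"
  shows "(b ^ k * of_nat (fact k) * genEuler a b c0 cinf n k =
           (\<Sum>j\<le>k. (-1) ^ (k - j) * of_nat (k choose j)
              * falling_b (b * of_nat n + c0 + cinf) (k - j) b
              * rising_b (c0 + cinf) j b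
              * falling_b (b * of_nat j + c0) n a)) \<and>
         (rising_b (c0 + cinf) k b * falling_b (b * of_nat k + c0) n a =
           (\<Sum>j\<le>k. of_nat (k choose j)
              * rising_b (b * of_nat n + c0 + cinf) (k - j) b
              * b ^ j * of_nat (fact j) * genEuler a b c0 cinf n j))"
  \<comment> \<open>Both identities hold for every k.\<close>
proof
  let ?x = "b * of_nat n + c0 + cinf"
  have expansion: "rising_b (c0 + cinf) m b * falling_b (b * of_nat m + c0) n a =
      (\<Sum>j\<le>m. of_nat (m choose j) * rising_b ?x (m - j) b * scaled_genEuler a b c0 cinf n j)" for m
    by (rule rising_b_falling_b_expansion)
  then have "scaled_genEuler a b c0 cinf n k = (\<Sum>j\<le>k. of_nat (k choose j) * rising_b (- ?x) (k - j) b
      * (rising_b (c0 + cinf) j b * falling_b (b * of_nat j + c0) n a))"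
    by (rule rising_b_binomial_inversion)
  then show "b ^ k * of_nat (fact k) * genEuler a b c0 cinf n k =
      (\<Sum>j\<le>k. (-1) ^ (k - j) * of_nat (k choose j) * falling_b ?x (k - j) b
         * rising_b (c0 + cinf) j b * falling_b (b * of_nat j + c0) n a)"
    unfolding rising_b_uminus scaled_genEuler_def by (simp add: mult_ac)
  show "rising_b (c0 + cinf) k b * falling_b (b * of_nat k + c0) n a =
      (\<Sum>j\<le>k. of_nat (k choose j) * rising_b ?x (k - j) b
         * b ^ j * of_nat (fact j) * genEuler a b c0 cinf n j)"
    using expansion[of k] by (simp add: scaled_genEuler_def mult_ac)
qed

end
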